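(* Let $f$ satisfy the $L$-descent condition for some $L>0$ and let $\{x^k\}$ be generated by Algorithm IRG with $\theta<\mu$, $\rho_k=\varepsilon_k$ for all $k$, and constant-type stepsizes (there exist $\delta\in(0,2)$ and $\delta'>0$ with $\delta'\le\frac{2-\delta}{L}$ and $t_k\in[\delta',\frac{2-\delta}{L}]$ for all $k$). Assume $\{x^k\}$ has an accumulation point $\bar x$ and $f$ satisfies the KL property at $\bar x$ with $\psi(t)=Mt^q$ for some $M>0$ and $q\in(0,1)$. Assume $\mathbb N\setminus\mathcal N$ is infinite, enumerate it increasingly as $j_1<j_2<\cdots$, and set $z^k:=x^{j_k}$. Then: (i) if $q\in(0,1/2]$, $\{z^k\}$ converges linearly to $\bar x$, i.e. there exist $C>0$ and $\lambda\in(0,1)$ with $\|z^k-\bar x\|\le C\lambda^k$ for all large $k$; (ii) if $q\in(1/2,1)$, there exists $\varrho>0$ with $\|z^k-\bar x\|\le\varrho k^{-\frac{1-q}{2q-1}}$ for all sufficiently large $k$.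
   Context: Algorithm IRG (general inexact reduced gradient framework). Let $f:\mathbb R^n\to\mathbb R$ be continuously differentiable. Parameters: initial point $x^1\in\mathbb R^n$, initial radii $\varepsilon_1>0$, $r_1>0$, reduction factors $\mu,\theta\in(0,1)$, and a sequence $\{\rho_k\}$ of positive numbers. For $k=1,2,\dots$: (1) choose $g^k\in\mathbb R^n$ with $\|g^k-\nabla f(x^k)\|\le\min\{\varepsilon_k,\rho_k\}$; (2) if $\|g^k\|\le r_k+\varepsilon_k$, set $r_{k+1}=\mu r_k$, $\varepsilon_{k+1}=\theta\varepsilon_k$, $d^k=0$; otherwise set $r_{k+1}=r_k$, $\varepsilon_{k+1}=\varepsilon_k$ and $d^k=-\frac{\|g^k\|-\varepsilon_k}{\|g^k\|}g^k$; (3) choose a stepsize $t_k>0$ by some rule; (4) set $x^{k+1}=x^k+t_kd^k$. The set of null iterations is $\mathcal N:=\{k\in\mathbb N: x^{k+1}=x^k\}$. $f$ satisfies the $L$-descent condition if $f(y)\le f(x)+\langle\nabla f(x),y-x\rangle+\frac L2\|y-x\|^2$ for all $x,y\in\mathbb R^n$. KL property with $\psi(t)=Mt^q$: there exist $\eta>0$ and a neighborhood $U$ of $\bar x$ such that $\|\nabla f(x)\|\ge M(f(x)-f(\bar x))^q$ for all $x\in U$ with $f(\bar x)<f(x)<f(\bar x)+\eta$. *)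

theory Defs
  imports "HOL-Analysis.Analysis" "HOL-Library.Infinite_Set"
begin

definition is_C1_with_gradient :: "('a::euclidean_space \<Rightarrow> real) \<Rightarrow> ('a \<Rightarrow> 'a) \<Rightarrow> bool" where
  "is_C1_with_gradient f grad \<longleftrightarrow>
     (\<forall>x. (f has_derivative (\<lambda>h. grad x \<bullet> h)) (at x)) \<and> continuous_on UNIV grad"

definition L_descent :: "('a::euclidean_space \<Rightarrow> real) \<Rightarrow> ('a \<Rightarrow> 'a) \<Rightarrow> real \<Rightarrow> bool" where
  "L_descent f grad L \<longleftrightarrow>
     (\<forall>x y. f y \<le> f x + grad x \<bullet> (y - x) + L / 2 * (norm (y - x))\<^sup>2)"

text \<open>Algorithm IRG, iterations indexed by k = 1, 2, ... (values at index 0 are irrelevant).\<close>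
definition IRG ::
  "('a::euclidean_space \<Rightarrow> real) \<Rightarrow> ('a \<Rightarrow> 'a) \<Rightarrow> real \<Rightarrow> real \<Rightarrow> (nat \<Rightarrow> real)
   \<Rightarrow> (nat \<Rightarrow> 'a) \<Rightarrow> (nat \<Rightarrow> 'a) \<Rightarrow> (nat \<Rightarrow> 'a) \<Rightarrow> (nat \<Rightarrow> real) \<Rightarrow> (nat \<Rightarrow> real)
   \<Rightarrow> (nat \<Rightarrow> real) \<Rightarrow> bool" where
  "IRG f grad \<mu> \<theta> \<rho> x g d \<epsilon> r t \<longleftrightarrow>
     \<epsilon> 1 > 0 \<and> r 1 > 0 \<and> 0 < \<mu> \<and> \<mu> < 1 \<and> 0 < \<theta> \<and> \<theta> < 1 \<and>
     (\<forall>k\<ge>1. \<rho> k > 0) \<and>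
     (\<forall>k\<ge>1. norm (g k - grad (x k)) \<le> min (\<epsilon> k) (\<rho> k)) \<and>
     (\<forall>k\<ge>1.
        (norm (g k) \<le> r k + \<epsilon> k \<longrightarrow>
           r (Suc k) = \<mu> * r k \<and> \<epsilon> (Suc k) = \<theta> * \<epsilon> k \<and> d k = 0) \<and>
        (\<not> norm (g k) \<le> r k + \<epsilon> k \<longrightarrow>
           r (Suc k) = r k \<and> \<epsilon> (Suc k) = \<epsilon> k \<and>
           d k = - ((norm (g k) - \<epsilon> k) / norm (g k)) *\<^sub>R g k)) \<and>
     (\<forall>k\<ge>1. t k > 0) \<and>
     (\<forall>k\<ge>1. x (Suc k) = x k + t k *\<^sub>R d k)"

definition null_iters :: "(nat \<Rightarrow> 'a) \<Rightarrow> nat set" where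
  "null_iters x = {k. k \<ge> 1 \<and> x (Suc k) = x k}"

definition accumulation_point :: "(nat \<Rightarrow> 'a::metric_space) \<Rightarrow> 'a \<Rightarrow> bool" where
  "accumulation_point x xb \<longleftrightarrow> (\<exists>h. strict_mono h \<and> (\<forall>k. h k \<ge> 1) \<and> (x \<circ> h) \<longlonglongrightarrow> xb)"

text \<open>KL property at xb with desingularizing function psi(t) = M t^q.\<close>
definition KL_power :: "('a::euclidean_space \<Rightarrow> real) \<Rightarrow> ('a \<Rightarrow> 'a) \<Rightarrow> 'a \<Rightarrow> real \<Rightarrow> real \<Rightarrow> bool" where
  "KL_power f grad xb M q \<longleftrightarrow>
     (\<exists>\<eta>>0. \<exists>U. open U \<and> xb \<in> U \<and>
        (\<forall>y\<in>U. f xb < f y \<and> f y < f xb + \<eta> \<longrightarrow> norm (grad y) \<ge> M * (f y - f xb) powr q))"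

end

theory Submission
  imports Defs
begin

text \<open>
  Along the non-null iterations each IRG step is a genuine descent step: the $L$-descent
  condition gives a sufficient decrease $f(z^{k+1}) \le f(z^k) - a\|z^{k+1}-z^k\|^2$, and since the
  ratio $\varepsilon_k/r_k$ never increases (because $\theta < \mu$) the gradient is bounded by a
  multiple of the step, $\|\nabla f(z^k)\| \le b\|z^{k+1}-z^k\|$. With these two estimates the
  usual Kurdyka--{\L}ojasiewicz argument applies: the concavity of $t \mapsto t^{1-q}$ turns the KL
  inequality into a summable bound on the steps, which traps the sequence near $\bar x$ and gives
  $\|z^k-\bar x\| \le K F_k^{1-q}$ for the value gaps $F_k = f(z^k)-f(\bar x)$, while the same two
  estimates give the recursion $F_{k+1} \le F_k - c F_k^{2q}$. For $q \le 1/2$ this recursion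
  contracts $F_k$ geometrically; for $q > 1/2$ it makes $F_k^{1-2q}$ grow at least linearly.
\<close>

lemma Bernoulli_inequality_powr_concave:
  fixes t \<alpha> :: real
  assumes "0 < \<alpha>" "\<alpha> < 1" "0 < t"
  shows "t powr \<alpha> \<le> 1 + \<alpha> * (t - 1)"
  using Youngs_inequality_0[of \<alpha> "1 - \<alpha>" t 1] assms by (simp add: algebra_simps)

lemma Bernoulli_inequality_powr_neg:
  fixes t p :: real
  assumes "0 < p" "0 < t"
  shows "1 + p * (1 - t) \<le> t powr (- p)"
proof -
  have weights: "1 / (1 + p) + p / (1 + p) = 1"
    using assms by (simp add: add_divide_distrib [symmetric])
  have "(t powr (- p)) powr (1 / (1 + p)) * t powr (p / (1 + p))
          \<le> 1 / (1 + p) * t powr (- p) + p / (1 + p) * t"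
    by (rule Youngs_inequality_0) (use assms weights in auto)
  moreover have "(t powr (- p)) powr (1 / (1 + p)) * t powr (p / (1 + p)) = 1"
    using assms by (simp add: powr_powr flip: powr_add)
  ultimately have "1 + p \<le> (1 / (1 + p) * t powr (- p) + p / (1 + p) * t) * (1 + p)"
    using assms by (simp add: pos_le_divide_eq)
  also have "\<dots> = t powr (- p) + p * t"
    using assms by (simp add: distrib_right)
  finally show ?thesis
    by (simp add: algebra_simps)
qed

lemma norm_diff_le_telescope:
  fixes u :: "nat \<Rightarrow> 'a::real_normed_vector" and p :: "nat \<Rightarrow> real"
  assumes "n \<le> m" "\<And>i. n \<le> i \<Longrightarrow> i < m \<Longrightarrow> norm (u (Suc i) - u i) \<le> p i - p (Suc i)"
  shows "norm (u m - u n) \<le> p n - p m"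
  using assms
proof (induction m rule: dec_induct)
  case base
  then show ?case by simp
next
  case (step m)
  have "norm (u (Suc m) - u n) \<le> norm (u m - u n) + norm (u (Suc m) - u m)"
    using norm_triangle_ineq[of "u m - u n" "u (Suc m) - u m"] by simp
  also have "\<dots> \<le> (p n - p m) + (p m - p (Suc m))"
    using step by (intro add_mono) auto
  finally show ?case
    by simp
qed

subsection \<open>A single inexact gradient step\<close>

lemma inexact_direction_descent:
  fixes g v d :: "'a::real_inner"
  assumes err: "norm (g - v) \<le> \<epsilon>" and big: "\<epsilon> < norm g"
    and d: "d = - ((norm g - \<epsilon>) / norm g) *\<^sub>R g"
  shows "norm d = norm g - \<epsilon>" and "v \<bullet> d \<le> - (norm d)\<^sup>2"
proof -
  have gpos: "0 < norm g"
    using err big norm_ge_zero[of "g - v"] by linarith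
  show nd: "norm d = norm g - \<epsilon>"
    using gpos big by (simp add: d)
  have gd: "g \<bullet> d = - ((norm g - \<epsilon>) * norm g)"
    using gpos by (simp add: d inner_commute power2_eq_square flip: power2_norm_eq_inner)
  have "(v - g) \<bullet> d \<le> norm (v - g) * norm d"
    by (rule norm_cauchy_schwarz)
  also have "\<dots> \<le> \<epsilon> * norm d"
    using err by (intro mult_right_mono) (auto simp: norm_minus_commute)
  finally have "v \<bullet> d \<le> - ((norm g - \<epsilon>) * norm g) + \<epsilon> * (norm g - \<epsilon>)"
    using gd nd by (simp add: inner_diff_left)
  also have "\<dots> = - (norm d)\<^sup>2"
    unfolding nd by (simp add: power2_eq_square algebra_simps)
  finally show "v \<bullet> d \<le> - (norm d)\<^sup>2" .
qed

lemma L_descent_sufficient_decrease: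
  assumes "L_descent f grad L" "0 < L" "grad x \<bullet> d \<le> - (norm d)\<^sup>2"
    and "0 < \<delta>" "\<delta> < 2" "0 < t" "t \<le> (2 - \<delta>) / L"
  shows "f (x + t *\<^sub>R d) \<le> f x - \<delta> * L / (2 * (2 - \<delta>)) * (norm (t *\<^sub>R d))\<^sup>2"
proof -
  define a where "a = \<delta> * L / (2 * (2 - \<delta>))"
  have "f (x + t *\<^sub>R d) \<le> f x + grad x \<bullet> (x + t *\<^sub>R d - x) + L / 2 * (norm (x + t *\<^sub>R d - x))\<^sup>2"
    using assms(1) unfolding L_descent_def by blast
  also have "\<dots> = f x + t * (grad x \<bullet> d) + L / 2 * (t\<^sup>2 * (norm d)\<^sup>2)"
    using \<open>0 < t\<close> by (simp add: power_mult_distrib)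
  also have "\<dots> \<le> f x - t * (norm d)\<^sup>2 + L / 2 * (t\<^sup>2 * (norm d)\<^sup>2)"
    using mult_left_mono[OF assms(3), of t] \<open>0 < t\<close> by simp
  also have "\<dots> \<le> f x - a * (t\<^sup>2 * (norm d)\<^sup>2)"
  proof -
    have "L / 2 + a = L / (2 - \<delta>)"
      using assms by (simp add: a_def field_simps)
    moreover have "t * L \<le> 2 - \<delta>"
      using assms by (simp add: field_simps)
    ultimately have "t * (L / 2 + a) \<le> 1"
      using assms by (simp add: pos_divide_le_eq)
    then have "t * (norm d)\<^sup>2 * (t * (L / 2 + a)) \<le> t * (norm d)\<^sup>2"
      using mult_left_mono[of _ 1 "t * (norm d)\<^sup>2"] \<open>0 < t\<close> by simp
    then show ?thesis
      by (simp add: power2_eq_square algebra_simps)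
  qed
  finally show ?thesis
    using \<open>0 < t\<close> by (simp add: a_def power_mult_distrib)
qed

lemma inexact_gradient_le_step:
  fixes g v d :: "'a::real_normed_vector"
  assumes err: "norm (g - v) \<le> \<epsilon>" and nd: "norm d = norm g - \<epsilon>" and big: "r + \<epsilon> < norm g"
    and ratio: "\<epsilon> \<le> c * r" "0 \<le> c" and t: "0 < \<delta>'" "\<delta>' \<le> t"
  shows "norm v \<le> (1 + 2 * c) / \<delta>' * norm (t *\<^sub>R d)"
proof -
  have "\<epsilon> \<le> c * norm d"
    using ratio mult_left_mono[of r "norm d" c] nd big by linarith
  moreover have "norm v \<le> norm g + \<epsilon>"
    using norm_triangle_sub[of v g] err by (simp add: norm_minus_commute)
  ultimately have "norm v \<le> norm d + 2 * (c * norm d)"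
    using nd by linarith
  also have "\<dots> = (1 + 2 * c) * norm d"
    by (simp add: algebra_simps)
  also have "\<dots> \<le> (1 + 2 * c) * (norm (t *\<^sub>R d) / \<delta>')"
  proof -
    have "\<delta>' * norm d \<le> t * norm d"
      using t by (intro mult_right_mono) auto
    then have "norm d \<le> norm (t *\<^sub>R d) / \<delta>'"
      using t by (simp add: field_simps)
    then show ?thesis
      using ratio by (intro mult_left_mono) auto
  qed
  finally show ?thesis
    by simp
qed

subsection \<open>Iterations of algorithm IRG\<close>

lemma IRG_radii_pos_ratio_le:
  assumes alg: "IRG f grad \<mu> \<theta> \<rho> x g d \<epsilon> r t" and "\<theta> < \<mu>" and "1 \<le> k"
  shows "0 < \<epsilon> k \<and> 0 < r k \<and> \<epsilon> k \<le> \<epsilon> 1 / r 1 * r k"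
  using \<open>1 \<le> k\<close>
proof (induction k rule: dec_induct)
  case base
  then show ?case
    using alg by (simp add: IRG_def)
next
  case (step k)
  have c: "0 \<le> \<epsilon> 1 / r 1"
    using alg by (simp add: IRG_def)
  show ?case
  proof (cases "norm (g k) \<le> r k + \<epsilon> k")
    case True
    then have eq: "r (Suc k) = \<mu> * r k" "\<epsilon> (Suc k) = \<theta> * \<epsilon> k"
      using alg step.hyps by (auto simp: IRG_def)
    have pos: "0 < \<epsilon> (Suc k)" "0 < r (Suc k)"
      using eq alg step.IH by (auto simp: IRG_def)
    have "\<epsilon> (Suc k) = \<theta> * \<epsilon> k"
      using eq by simp
    also have "\<dots> \<le> \<theta> * (\<epsilon> 1 / r 1 * r k)"
      using alg step.IH by (intro mult_left_mono) (auto simp: IRG_def)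
    also have "\<dots> \<le> \<mu> * (\<epsilon> 1 / r 1 * r k)"
      using \<open>\<theta> < \<mu>\<close> step.IH c by (intro mult_right_mono) auto
    also have "\<dots> = \<epsilon> 1 / r 1 * r (Suc k)"
      using eq by simp
    finally show ?thesis
      using pos by blast
  next
    case False
    then show ?thesis
      using alg step by (auto simp: IRG_def)
  qed
qed

lemma IRG_nonnull_step:
  assumes alg: "IRG f grad \<mu> \<theta> \<rho> x g d \<epsilon> r t" and "\<theta> < \<mu>"
    and L: "0 < L" "L_descent f grad L"
    and step: "0 < \<delta>" "\<delta> < 2" "0 < \<delta>'" "\<delta>' \<le> t k" "t k \<le> (2 - \<delta>) / L"
    and k: "1 \<le> k" "x (Suc k) \<noteq> x k"
  shows "f (x (Suc k)) \<le> f (x k) - \<delta> * L / (2 * (2 - \<delta>)) * (norm (x (Suc k) - x k))\<^sup>2"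
    and "norm (grad (x k)) \<le> (1 + 2 * (\<epsilon> 1 / r 1)) / \<delta>' * norm (x (Suc k) - x k)"
proof -
  have err: "norm (g k - grad (x k)) \<le> \<epsilon> k" and xs: "x (Suc k) = x k + t k *\<^sub>R d k"
    using alg k by (auto simp: IRG_def)
  have big: "r k + \<epsilon> k < norm (g k)"
  proof (rule ccontr)
    assume "\<not> r k + \<epsilon> k < norm (g k)"
    then have "d k = 0"
      using alg k by (auto simp: IRG_def)
    then show False
      using xs k by simp
  qed
  then have dk: "d k = - ((norm (g k) - \<epsilon> k) / norm (g k)) *\<^sub>R g k"
    using alg k by (auto simp: IRG_def)
  have radii: "0 < \<epsilon> k" "0 < r k" "\<epsilon> k \<le> \<epsilon> 1 / r 1 * r k"
    using IRG_radii_pos_ratio_le[OF alg \<open>\<theta> < \<mu>\<close> k(1)] by auto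
  have "0 \<le> \<epsilon> 1 / r 1"
    using alg by (simp add: IRG_def)
  have nd: "norm (d k) = norm (g k) - \<epsilon> k" and descent: "grad (x k) \<bullet> d k \<le> - (norm (d k))\<^sup>2"
    using inexact_direction_descent[OF err _ dk] big radii by auto
  show "f (x (Suc k)) \<le> f (x k) - \<delta> * L / (2 * (2 - \<delta>)) * (norm (x (Suc k) - x k))\<^sup>2"
    using L_descent_sufficient_decrease[OF L(2,1) descent step(1,2)] step xs by simp
  show "norm (grad (x k)) \<le> (1 + 2 * (\<epsilon> 1 / r 1)) / \<delta>' * norm (x (Suc k) - x k)"
    using inexact_gradient_le_step[OF err nd big radii(3) \<open>0 \<le> \<epsilon> 1 / r 1\<close> step(3,4)] xs by simp
qed

text \<open>
  The set $\mathbb N \setminus \mathcal N$. Its enumeration counts from $0$, so $j_k$ is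
  \<open>enumerate (nonnull_iters x) (k - 1)\<close>.
\<close>

definition nonnull_iters :: "(nat \<Rightarrow> 'a) \<Rightarrow> nat set" where
  "nonnull_iters x = {k. 1 \<le> k} - null_iters x"

lemma nonnull_iters_gap_const:
  assumes inf: "infinite (nonnull_iters x)"
    and "enumerate (nonnull_iters x) n < j" "j \<le> enumerate (nonnull_iters x) (Suc n)"
  shows "x j = x (enumerate (nonnull_iters x) (Suc n))"
proof -
  let ?e = "enumerate (nonnull_iters x)"
  have const: "x i = x (Suc (?e n))" if "Suc (?e n) \<le> i" "i \<le> ?e (Suc n)" for i
    using that
  proof (induction i rule: dec_induct)
    case base
    then show ?case by simp
  next
    case (step i)
    have "i \<notin> nonnull_iters x"
      using step.hyps step.prems not_less_Least[of i "\<lambda>s. s \<in> nonnull_iters x \<and> ?e n < s"]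
      by (auto simp: enumerate_Suc''[OF inf])
    then have "x (Suc i) = x i"
      using step.hyps by (simp add: nonnull_iters_def null_iters_def)
    with step show ?case
      by simp
  qed
  have "Suc (?e n) \<le> ?e (Suc n)"
    using enumerate_step[OF inf] by (simp add: Suc_leI)
  then show ?thesis
    using const assms(2,3) by (metis Suc_leI order_refl)
qed

lemma nonnull_iters_enumerate_Suc:
  assumes "infinite (nonnull_iters x)"
  shows "x (enumerate (nonnull_iters x) (Suc n)) = x (Suc (enumerate (nonnull_iters x) n))"
  using nonnull_iters_gap_const[OF assms, of n "Suc (enumerate (nonnull_iters x) n)"]
    enumerate_step[OF assms, of n] by simp

lemma iterate_eq_later_nonnull_iterate:
  assumes inf: "infinite (nonnull_iters x)" and j: "enumerate (nonnull_iters x) N < j"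
  shows "\<exists>m>N. x j = x (enumerate (nonnull_iters x) m)"
proof -
  let ?e = "enumerate (nonnull_iters x)"
  define m where "m = (LEAST m. j \<le> ?e m)"
  have jm: "j \<le> ?e m"
    unfolding m_def by (rule LeastI[of _ j]) (rule le_enumerate[OF inf])
  have "N < m"
    using jm j inf by (metis enumerate_mono_le_iff le_less_trans not_le order_less_imp_le)
  then obtain m' where m': "m = Suc m'"
    using less_imp_Suc_add by blast
  have "?e m' < j"
    using not_less_Least[of m' "\<lambda>m. j \<le> ?e m"] m' by (simp add: m_def)
  then show ?thesis
    using nonnull_iters_gap_const[OF inf _ jm[unfolded m']] \<open>N < m\<close> m' by blast
qed

lemma accumulation_point_nonnull_iters:
  assumes acc: "accumulation_point x xb" and inf: "infinite (nonnull_iters x)" and "0 < e"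
  shows "\<exists>k\<ge>N. dist (x (enumerate (nonnull_iters x) (k - 1))) xb < e"
proof -
  obtain h where h: "strict_mono h" "(x \<circ> h) \<longlonglongrightarrow> xb"
    using acc unfolding accumulation_point_def by blast
  have "\<forall>\<^sub>F i in sequentially. dist (x (h i)) xb < e \<and> Suc (enumerate (nonnull_iters x) N) \<le> i"
    using tendstoD[OF h(2) \<open>0 < e\<close>] eventually_ge_at_top by (auto intro: eventually_conj)
  then obtain i where i: "dist (x (h i)) xb < e" "enumerate (nonnull_iters x) N < i"
    by (auto simp: eventually_sequentially Suc_le_eq)
  then have "enumerate (nonnull_iters x) N < h i"
    using seq_suble[OF h(1), of i] by simp
  then obtain m where "N < m" "x (h i) = x (enumerate (nonnull_iters x) m)"
    using iterate_eq_later_nonnull_iterate[OF inf] by blast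
  then show ?thesis
    using i(1) by (intro exI[of _ "Suc m"]) auto
qed

lemma IRG_nonnull_subsequence_descent:
  assumes alg: "IRG f grad \<mu> \<theta> \<rho> x g d \<epsilon> r t" and "\<theta> < \<mu>"
    and L: "0 < L" "L_descent f grad L"
    and step: "0 < \<delta>" "\<delta> < 2" "0 < \<delta>'" "\<forall>k\<ge>1. \<delta>' \<le> t k \<and> t k \<le> (2 - \<delta>) / L"
    and inf: "infinite (nonnull_iters x)" and z: "\<And>k. z k = x (enumerate (nonnull_iters x) (k - 1))"
    and n: "1 \<le> n"
  shows "z (Suc n) \<noteq> z n"
    and "f (z (Suc n)) \<le> f (z n) - \<delta> * L / (2 * (2 - \<delta>)) * (norm (z (Suc n) - z n))\<^sup>2"
    and "norm (grad (z n)) \<le> (1 + 2 * (\<epsilon> 1 / r 1)) / \<delta>' * norm (z (Suc n) - z n)"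
proof -
  define k where "k = enumerate (nonnull_iters x) (n - 1)"
  have "k \<in> nonnull_iters x"
    unfolding k_def by (rule enumerate_in_set[OF inf])
  then have k: "1 \<le> k" "x (Suc k) \<noteq> x k"
    by (auto simp: nonnull_iters_def null_iters_def)
  have zk: "z n = x k" "z (Suc n) = x (Suc k)"
    using nonnull_iters_enumerate_Suc[OF inf, of "n - 1"] n by (simp_all add: z k_def)
  show "z (Suc n) \<noteq> z n"
    using k zk by simp
  show "f (z (Suc n)) \<le> f (z n) - \<delta> * L / (2 * (2 - \<delta>)) * (norm (z (Suc n) - z n))\<^sup>2"
    and "norm (grad (z n)) \<le> (1 + 2 * (\<epsilon> 1 / r 1)) / \<delta>' * norm (z (Suc n) - z n)"
    using IRG_nonnull_step[OF alg \<open>\<theta> < \<mu>\<close> L step(1-3) _ _ k] step(4) k(1) zk by auto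
qed

subsection \<open>The Kurdyka--{\L}ojasiewicz argument\<close>

lemma KL_power_ball:
  assumes "KL_power f grad xb M q"
  obtains \<rho> \<eta> where "0 < \<rho>" "0 < \<eta>"
    and "\<And>y. dist y xb < \<rho> \<Longrightarrow> f xb < f y \<Longrightarrow> f y < f xb + \<eta> \<Longrightarrow> M * (f y - f xb) powr q \<le> norm (grad y)"
proof -
  obtain \<eta> U where "0 < \<eta>" "open U" "xb \<in> U"
    and KLU: "\<And>y. y \<in> U \<Longrightarrow> f xb < f y \<Longrightarrow> f y < f xb + \<eta> \<Longrightarrow> M * (f y - f xb) powr q \<le> norm (grad y)"
    using assms unfolding KL_power_def by blast
  then obtain \<rho> where "0 < \<rho>" "ball xb \<rho> \<subseteq> U"
    using open_contains_ball by blast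
  show thesis
  proof (rule that[OF \<open>0 < \<rho>\<close> \<open>0 < \<eta>\<close>])
    fix y
    assume "dist y xb < \<rho>" "f xb < f y" "f y < f xb + \<eta>"
    then show "M * (f y - f xb) powr q \<le> norm (grad y)"
      using KLU \<open>ball xb \<rho> \<subseteq> U\<close> by (auto simp: dist_commute)
  qed
qed

lemma strict_descent_values_tendsto:
  fixes w :: "nat \<Rightarrow> 'a::metric_space" and f :: "'a \<Rightarrow> real"
  assumes desc: "\<And>n. N\<^sub>0 \<le> n \<Longrightarrow> f (w (Suc n)) < f (w n)"
    and cont: "isCont f xb"
    and clus: "\<And>N e. 0 < e \<Longrightarrow> \<exists>n\<ge>N. dist (w n) xb < e"
  shows "\<forall>n\<ge>N\<^sub>0. f xb < f (w n)" and "(\<lambda>n. f (w n)) \<longlonglongrightarrow> f xb"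
proof -
  have mono: "f (w m) \<le> f (w n)" if "N\<^sub>0 \<le> n" "n \<le> m" for n m
    using that(2)
  proof (induction m rule: dec_induct)
    case (step m)
    then show ?case
      using desc[of m] that by simp
  qed simp
  have near: "\<exists>n\<ge>N. \<bar>f (w n) - f xb\<bar> < e" if "0 < e" for N e
  proof -
    obtain d where "0 < d" "\<And>y. dist y xb < d \<Longrightarrow> dist (f y) (f xb) < e"
      using cont \<open>0 < e\<close> unfolding continuous_at_eps_delta by blast
    then show ?thesis
      using clus[of d N] by (auto simp: dist_real_def)
  qed
  have ge: "f xb \<le> f (w n)" if "N\<^sub>0 \<le> n" for n
  proof (rule ccontr)
    assume "\<not> f xb \<le> f (w n)"
    then obtain m where "n \<le> m" "\<bar>f (w m) - f xb\<bar> < f xb - f (w n)"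
      using near[of "f xb - f (w n)" n] by auto
    moreover have "f (w m) \<le> f (w n)"
      using mono[OF that \<open>n \<le> m\<close>] .
    ultimately show False
      by linarith
  qed
  show "\<forall>n\<ge>N\<^sub>0. f xb < f (w n)"
    using ge desc by (meson le_SucI order_le_less_trans)
  show "(\<lambda>n. f (w n)) \<longlonglongrightarrow> f xb"
  proof (rule metric_LIMSEQ_I)
    fix e :: real
    assume "0 < e"
    then obtain n0 where n0: "N\<^sub>0 \<le> n0" "\<bar>f (w n0) - f xb\<bar> < e"
      using near by blast
    have "dist (f (w n)) (f xb) < e" if "n0 \<le> n" for n
      using mono[OF n0(1) that] ge[of n] n0 that by (auto simp: dist_real_def)
    then show "\<exists>no. \<forall>n\<ge>no. dist (f (w n)) (f xb) < e"
      by blast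
  qed
qed

text \<open>The concavity of $t \mapsto t^{1-q}$ converts the KL inequality into a bound of the step length.\<close>

lemma KL_step_le_powr_decrease:
  fixes F F' D a b M q :: real
  assumes "0 < a" "0 < M" "0 < q" "q < 1" "0 < F'" "0 < D"
    and KL: "M * F powr q \<le> b * D" and desc: "a * D\<^sup>2 \<le> F - F'"
  shows "D \<le> b / ((1 - q) * a * M) * (F powr (1 - q) - F' powr (1 - q))"
proof -
  have "0 < a * D\<^sup>2"
    using assms by simp
  then have F: "F' < F" "0 < F"
    using desc \<open>0 < F'\<close> by linarith+
  have P: "0 < F powr q"
    using F by simp
  then have b: "0 < b"
    using KL \<open>0 < M\<close> \<open>0 < D\<close> by (metis mult_pos_pos zero_less_mult_pos2 order_less_le_trans)
  have "(F' / F) powr (1 - q) \<le> 1 + (1 - q) * (F' / F - 1)"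
    using Bernoulli_inequality_powr_concave[of "1 - q" "F' / F"] assms F by simp
  then have "F' powr (1 - q) \<le> F powr (1 - q) * (1 + (1 - q) * (F' / F - 1))"
    using F assms by (simp add: powr_divide divide_le_eq mult.commute)
  also have "\<dots> = F powr (1 - q) - (1 - q) * (F - F') / F powr q"
    using F by (simp add: powr_diff field_simps)
  finally have "(1 - q) * ((F - F') / F powr q) \<le> F powr (1 - q) - F' powr (1 - q)"
    by simp
  moreover have "(1 - q) * (a * D\<^sup>2 / F powr q) \<le> (1 - q) * ((F - F') / F powr q)"
    using desc P \<open>q < 1\<close> by (intro mult_left_mono divide_right_mono) auto
  ultimately have "(1 - q) * (a * D\<^sup>2 / F powr q) \<le> F powr (1 - q) - F' powr (1 - q)"
    by linarith
  moreover have "a * M * D / b \<le> a * D\<^sup>2 / F powr q"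
    using KL P b assms by (simp add: field_simps power2_eq_square mult_left_mono)
  ultimately have "(1 - q) * (a * M * D / b) \<le> F powr (1 - q) - F' powr (1 - q)"
    using \<open>q < 1\<close> by (smt (verit) mult_left_mono)
  then show ?thesis
    using assms b by (simp add: field_simps)
qed

lemma KL_sufficient_decrease_powr:
  fixes F F' D a b M q :: real
  assumes "0 < b" "0 < M" "0 < F"
    and KL: "M * F powr q \<le> b * D" and desc: "a * D\<^sup>2 \<le> F - F'" and "0 \<le> a"
  shows "F' \<le> F - a * (M / b)\<^sup>2 * F powr (2 * q)"
proof -
  have "M / b * F powr q \<le> D"
    using KL assms by (simp add: field_simps)
  then have "(M / b * F powr q)\<^sup>2 \<le> D\<^sup>2"
    using assms by (intro power_mono) auto
  moreover have "(M / b * F powr q)\<^sup>2 = (M / b)\<^sup>2 * F powr (2 * q)"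
    using \<open>0 < F\<close> by (simp only: power_mult_distrib powr_power) (simp add: mult.commute)
  ultimately have "(M / b)\<^sup>2 * F powr (2 * q) \<le> D\<^sup>2"
    by simp
  then show ?thesis
    using desc mult_left_mono[OF _ \<open>0 \<le> a\<close>] by (smt (verit) mult.assoc)
qed

lemma trapped_by_vanishing_potential:
  fixes w :: "nat \<Rightarrow> 'a::real_normed_vector" and \<phi> :: "nat \<Rightarrow> real"
  assumes \<phi>: "\<And>n. N\<^sub>0 \<le> n \<Longrightarrow> 0 \<le> \<phi> n" "\<phi> \<longlonglongrightarrow> 0" and "0 < \<rho>"
    and local_step: "\<And>n. N\<^sub>0 \<le> n \<Longrightarrow> dist (w n) xb < \<rho> \<Longrightarrow> norm (w (Suc n) - w n) \<le> \<phi> n - \<phi> (Suc n)"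
    and clus: "\<And>N e. 0 < e \<Longrightarrow> \<exists>n\<ge>N. dist (w n) xb < e"
  shows "\<exists>N. \<forall>n\<ge>N. dist (w n) xb < \<rho> \<and> norm (w n - xb) \<le> \<phi> n"
proof -
  have "\<forall>\<^sub>F n in sequentially. \<phi> n < \<rho> / 2 \<and> N\<^sub>0 \<le> n"
    using order_tendstoD(2)[OF \<phi>(2), of "\<rho> / 2"] \<open>0 < \<rho>\<close> eventually_ge_at_top
    by (auto intro: eventually_conj)
  then obtain N1 where N1: "\<And>n. N1 \<le> n \<Longrightarrow> \<phi> n < \<rho> / 2 \<and> N\<^sub>0 \<le> n"
    by (auto simp: eventually_sequentially)
  obtain N where N: "N1 \<le> N" "dist (w N) xb < \<rho> / 2"
    using clus[of "\<rho> / 2" N1] \<open>0 < \<rho>\<close> by auto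
  have trapped: "dist (w m) xb < \<rho> \<and> norm (w m - w N) \<le> \<phi> N - \<phi> m" if "N \<le> m" for m
    using that
  proof (induction m rule: dec_induct)
    case base
    have "dist (w N) xb < \<rho>"
      using N(2) zero_le_dist[of "w N" xb] by linarith
    then show ?case
      by simp
  next
    case (step m)
    have "norm (w (Suc m) - w m) \<le> \<phi> m - \<phi> (Suc m)"
      using local_step step N N1[of m] by simp
    then have len: "norm (w (Suc m) - w N) \<le> \<phi> N - \<phi> (Suc m)"
      using step.IH norm_triangle_ineq[of "w m - w N" "w (Suc m) - w m"] by simp
    have "dist (w (Suc m)) xb \<le> dist (w N) xb + norm (w (Suc m) - w N)"
      by (metis dist_commute dist_norm dist_triangle)
    also have "\<dots> < \<rho>"
      using len N N1[of N] \<phi>(1)[of "Suc m"] N1[of "Suc m"] step.hyps by simp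
    finally show ?case
      using len by simp
  qed
  have steps: "norm (w (Suc i) - w i) \<le> \<phi> i - \<phi> (Suc i)" if "N \<le> i" for i
    using local_step[of i] trapped[OF that] N(1) N1[of i] that by simp
  have bound: "norm (w n - xb) \<le> \<phi> n" if "N \<le> n" for n
  proof (rule field_le_epsilon)
    fix e :: real
    assume "0 < e"
    then obtain m where m: "n \<le> m" "dist (w m) xb < e"
      using clus by blast
    have "norm (w m - w n) \<le> \<phi> n - \<phi> m"
      by (rule norm_diff_le_telescope[OF m(1)]) (use steps that in auto)
    moreover have "norm (w n - xb) \<le> norm (w m - w n) + dist (w m) xb"
      by (metis dist_commute dist_norm dist_triangle)
    moreover have "0 \<le> \<phi> m"
      using \<phi>(1) N1[of m] N(1) that m(1) by simp
    ultimately show "norm (w n - xb) \<le> \<phi> n + e"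
      using m(2) by linarith
  qed
  show ?thesis
    using trapped bound by blast
qed

lemma KL_descent_sequence_estimates:
  fixes f :: "'a::euclidean_space \<Rightarrow> real" and grad :: "'a \<Rightarrow> 'a" and w :: "nat \<Rightarrow> 'a"
  assumes "0 < a" "0 < b" and KLp: "0 < M" "0 < q" "q < 1"
    and desc: "\<And>n. N\<^sub>0 \<le> n \<Longrightarrow> f (w (Suc n)) \<le> f (w n) - a * (norm (w (Suc n) - w n))\<^sup>2"
    and gb: "\<And>n. N\<^sub>0 \<le> n \<Longrightarrow> norm (grad (w n)) \<le> b * norm (w (Suc n) - w n)"
    and ne: "\<And>n. N\<^sub>0 \<le> n \<Longrightarrow> w (Suc n) \<noteq> w n"
    and cont: "isCont f xb" and clus: "\<And>N e. 0 < e \<Longrightarrow> \<exists>n\<ge>N. dist (w n) xb < e"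
    and KL: "KL_power f grad xb M q"
  defines "F \<equiv> \<lambda>n. f (w n) - f xb"
  shows "\<exists>N K c. 0 < K \<and> 0 < c \<and> F \<longlonglongrightarrow> 0 \<and>
           (\<forall>n\<ge>N. 0 < F n \<and> norm (w n - xb) \<le> K * F n powr (1 - q) \<and>
                   F (Suc n) \<le> F n - c * F n powr (2 * q))"
proof -
  have strict: "f (w (Suc n)) < f (w n)" if "N\<^sub>0 \<le> n" for n
  proof -
    have "0 < a * (norm (w (Suc n) - w n))\<^sup>2"
      using ne[OF that] \<open>0 < a\<close> by simp
    then show ?thesis
      using desc[OF that] by linarith
  qed
  have Fpos: "\<And>n. N\<^sub>0 \<le> n \<Longrightarrow> 0 < F n" and Flim: "F \<longlonglongrightarrow> 0"
    using strict_descent_values_tendsto[OF strict cont clus] tendsto_diff[of _ _ _ "\<lambda>_. f xb"]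
    by (auto simp: F_def LIM_zero_iff)
  obtain \<rho> \<eta> where "0 < \<rho>" "0 < \<eta>"
    and KLB: "\<And>y. dist y xb < \<rho> \<Longrightarrow> f xb < f y \<Longrightarrow> f y < f xb + \<eta> \<Longrightarrow> M * (f y - f xb) powr q \<le> norm (grad y)"
    using KL_power_ball[OF KL] by blast
  have "\<forall>\<^sub>F n in sequentially. F n < \<eta> \<and> N\<^sub>0 \<le> n"
    using order_tendstoD(2)[OF Flim \<open>0 < \<eta>\<close>] eventually_ge_at_top by (auto intro: eventually_conj)
  then obtain N1 where N1: "\<And>n. N1 \<le> n \<Longrightarrow> F n < \<eta> \<and> N\<^sub>0 \<le> n"
    by (auto simp: eventually_sequentially)
  have KLn: "M * F n powr q \<le> b * norm (w (Suc n) - w n)" if "N1 \<le> n" "dist (w n) xb < \<rho>" for n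
    using KLB[of "w n"] gb[of n] Fpos[of n] N1[OF that(1)] that(2)
    by (force simp: F_def)
  define K where "K = b / ((1 - q) * a * M)"
  have "0 < K"
    using assms by (simp add: K_def)
  have "\<exists>N. \<forall>n\<ge>N. dist (w n) xb < \<rho> \<and> norm (w n - xb) \<le> K * F n powr (1 - q)"
  proof (rule trapped_by_vanishing_potential[where N\<^sub>0 = N1])
    have "\<forall>\<^sub>F n in sequentially. 0 \<le> F n"
      using eventually_ge_at_top[of N\<^sub>0] by eventually_elim (use Fpos in fastforce)
    then have "(\<lambda>n. F n powr (1 - q)) \<longlonglongrightarrow> 0"
      by (rule tendsto_zero_powrI[OF Flim tendsto_const]) (use KLp in auto)
    then show "(\<lambda>n. K * F n powr (1 - q)) \<longlonglongrightarrow> 0"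
      by (rule tendsto_mult_right_zero)
    fix n
    assume n: "N1 \<le> n" "dist (w n) xb < \<rho>"
    have "F (Suc n) \<le> F n - a * (norm (w (Suc n) - w n))\<^sup>2"
      using desc[of n] N1[OF n(1)] by (simp add: F_def)
    then show "norm (w (Suc n) - w n) \<le> K * F n powr (1 - q) - K * F (Suc n) powr (1 - q)"
      using KL_step_le_powr_decrease[OF \<open>0 < a\<close> KLp _ _ KLn[OF n]] Fpos[of "Suc n"] ne[of n] N1[OF n(1)]
      by (simp add: K_def right_diff_distrib)
  qed (use \<open>0 < K\<close> \<open>0 < \<rho>\<close> clus in auto)
  then obtain N where N: "\<And>n. N \<le> n \<Longrightarrow> dist (w n) xb < \<rho> \<and> norm (w n - xb) \<le> K * F n powr (1 - q)"
    by blast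
  define c where "c = a * (M / b)\<^sup>2"
  have "F (Suc n) \<le> F n - c * F n powr (2 * q)" if "max N N1 \<le> n" for n
    using KL_sufficient_decrease_powr[OF \<open>0 < b\<close> KLp(1) Fpos KLn] desc[of n] N[of n] N1[of n] that \<open>0 < a\<close>
    by (simp add: F_def c_def)
  moreover have "0 < c"
    using assms by (simp add: c_def)
  ultimately show ?thesis
    using \<open>0 < K\<close> Flim Fpos N N1 by (intro exI[of _ "max N N1"] exI[of _ K] exI[of _ c]) auto
qed

subsection \<open>Convergence rates from the recursion $F_{n+1} \le F_n - c F_n^{2q}$\<close>

lemma KL_recursion_linear_rate:
  fixes F e :: "nat \<Rightarrow> real"
  assumes "0 < K" "0 < c" "0 < q" "q \<le> 1/2" and Flim: "F \<longlonglongrightarrow> 0"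
    and est: "\<And>n. N \<le> n \<Longrightarrow> 0 < F n \<and> e n \<le> K * F n powr (1 - q) \<and> F (Suc n) \<le> F n - c * F n powr (2 * q)"
  shows "\<exists>C>0. \<exists>lam. 0 < lam \<and> lam < 1 \<and> (\<forall>\<^sub>F n in sequentially. e n \<le> C * lam ^ n)"
proof -
  have "\<forall>\<^sub>F n in sequentially. F n < 1 \<and> N \<le> n"
    using order_tendstoD(2)[OF Flim, of 1] eventually_ge_at_top by (auto intro: eventually_conj)
  then obtain N1 where N1: "\<And>n. N1 \<le> n \<Longrightarrow> F n < 1 \<and> N \<le> n"
    by (auto simp: eventually_sequentially)
  define \<beta> where "\<beta> = 1 - c"
  have contract: "F (Suc n) \<le> \<beta> * F n" if "N1 \<le> n" for n
  proof -
    have n: "F n < 1" "0 < F n" "F (Suc n) \<le> F n - c * F n powr (2 * q)"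
      using N1[OF that] est[of n] by auto
    then have "F n powr 1 \<le> F n powr (2 * q)"
      using \<open>q \<le> 1/2\<close> by (intro powr_mono') auto
    then have "c * F n \<le> c * F n powr (2 * q)"
      using n \<open>0 < c\<close> by simp
    then show ?thesis
      using n by (simp add: \<beta>_def algebra_simps)
  qed
  have "0 < \<beta> * F N1"
    using contract[of N1] est[of "Suc N1"] N1[of "Suc N1"] by force
  then have "0 < \<beta>"
    using est[of N1] N1[of N1] by (simp add: zero_less_mult_iff)
  have "\<beta> < 1"
    using \<open>0 < c\<close> by (simp add: \<beta>_def)
  define C0 where "C0 = F N1 / \<beta> ^ N1"
  have geometric: "F n \<le> C0 * \<beta> ^ n" if "N1 \<le> n" for n
    using that
  proof (induction n rule: dec_induct)
    case (step n)
    have "F (Suc n) \<le> \<beta> * F n"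
      using contract[of n] step.hyps by simp
    also have "\<dots> \<le> \<beta> * (C0 * \<beta> ^ n)"
      using step.IH \<open>0 < \<beta>\<close> by (intro mult_left_mono) auto
    finally show ?case
      by (simp add: algebra_simps)
  qed (use \<open>0 < \<beta>\<close> in \<open>simp add: C0_def\<close>)
  define lam where "lam = \<beta> powr (1 - q)"
  have "0 < C0"
    using est[of N1] N1[of N1] \<open>0 < \<beta>\<close> by (simp add: C0_def)
  have "e n \<le> K * C0 powr (1 - q) * lam ^ n" if "N1 \<le> n" for n
  proof -
    have "0 < F n"
      using est N1 that by blast
    have "e n \<le> K * F n powr (1 - q)"
      using est N1 that by blast
    also have "\<dots> \<le> K * (C0 * \<beta> ^ n) powr (1 - q)"
      using geometric[OF that] \<open>0 < F n\<close> assms by (intro mult_left_mono powr_mono2) auto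
    also have "\<dots> = K * C0 powr (1 - q) * lam ^ n"
      using \<open>0 < \<beta>\<close> \<open>0 < C0\<close>
      by (simp add: lam_def powr_mult powr_realpow [symmetric] powr_powr mult.commute)
    finally show ?thesis .
  qed
  moreover have "0 < lam" "lam < 1"
    using \<open>0 < \<beta>\<close> \<open>\<beta> < 1\<close> assms powr01_less_one[of \<beta> "1 - q"] by (auto simp: lam_def)
  ultimately show ?thesis
    using \<open>0 < K\<close> \<open>0 < C0\<close>
    by (intro exI[of _ "K * C0 powr (1 - q)"] exI[of _ lam]) (auto simp: eventually_sequentially)
qed

lemma KL_recursion_step_powr_growth:
  fixes F F' c q :: real
  assumes "0 < F" "0 < F'" "1/2 < q" and rec: "F' \<le> F - c * F powr (2 * q)"
  shows "F powr (1 - 2 * q) + (2 * q - 1) * c \<le> F' powr (1 - 2 * q)"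
proof -
  define p where "p = 2 * q - 1"
  have "0 < p"
    using assms by (simp add: p_def)
  define s where "s = F' / F"
  have "0 < s" "F' = s * F"
    using assms by (simp_all add: s_def)
  have "F' powr (- p) = s powr (- p) * F powr (- p)"
    using \<open>0 < s\<close> \<open>0 < F\<close> by (simp add: \<open>F' = s * F\<close> powr_mult)
  also have "\<dots> \<ge> (1 + p * (1 - s)) * F powr (- p)"
    using Bernoulli_inequality_powr_neg[OF \<open>0 < p\<close> \<open>0 < s\<close>] by (intro mult_right_mono) auto
  finally have grow: "F powr (- p) + p * ((1 - s) * F powr (- p)) \<le> F' powr (- p)"
    by (simp add: algebra_simps)
  have "(1 - s) * F powr (- p) = (F - F') * (F powr (- p) / F)"
    using \<open>0 < F\<close> by (simp add: s_def field_simps)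
  also have "\<dots> \<ge> c * F powr (2 * q) * (F powr (- p) / F)"
    using rec \<open>0 < F\<close> by (intro mult_right_mono) auto
  also have "c * F powr (2 * q) * (F powr (- p) / F) = c"
  proof -
    have "F powr (2 * q) * F powr (- p) = F powr 1"
      by (simp add: p_def flip: powr_add)
    then show ?thesis
      using \<open>0 < F\<close> by (simp add: mult.assoc)
  qed
  finally have "p * c \<le> p * ((1 - s) * F powr (- p))"
    using \<open>0 < p\<close> by (intro mult_left_mono) auto
  moreover have eq: "1 - 2 * q = - p" "2 * q - 1 = p"
    by (simp_all add: p_def)
  ultimately show ?thesis
    unfolding eq using grow by linarith
qed

lemma KL_recursion_sublinear_rate:
  fixes F e :: "nat \<Rightarrow> real"
  assumes "0 < K" "0 < c" "1/2 < q" "q < 1"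
    and est: "\<And>n. N \<le> n \<Longrightarrow> 0 < F n \<and> e n \<le> K * F n powr (1 - q) \<and> F (Suc n) \<le> F n - c * F n powr (2 * q)"
  shows "\<exists>\<rho>>0. \<forall>\<^sub>F n in sequentially. e n \<le> \<rho> * real n powr (- ((1 - q) / (2 * q - 1)))"
proof -
  define p where "p = 2 * q - 1"
  define s where "s = (1 - q) / p"
  have "0 < p" "0 < s"
    using assms by (simp_all add: p_def s_def)
  have growth: "p * c * real (n - N) \<le> F n powr (- p)" if "N \<le> n" for n
    using that
  proof (induction n rule: dec_induct)
    case (step n)
    have "F n powr (- p) + p * c \<le> F (Suc n) powr (- p)"
      using KL_recursion_step_powr_growth[of "F n" "F (Suc n)" q c] est[of n] est[of "Suc n"] step.hyps assms
      by (simp add: p_def)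
    then show ?case
      using step.IH step.hyps by (simp add: Suc_diff_le algebra_simps)
  qed simp
  define \<rho> where "\<rho> = K * (p * c / 2) powr (- s)"
  have "e n \<le> \<rho> * real n powr (- s)" if "2 * N + 1 \<le> n" for n
  proof -
    have "p * c / 2 * real n \<le> p * c * real (n - N)"
      using that \<open>0 < p\<close> \<open>0 < c\<close> by (simp add: of_nat_diff field_simps)
    then have lower: "p * c / 2 * real n \<le> F n powr (- p)"
      using growth[of n] that by linarith
    have "e n \<le> K * F n powr (1 - q)"
      using est[of n] that by simp
    also have "F n powr (1 - q) = (F n powr (- p)) powr (- s)"
      using \<open>0 < p\<close> by (simp add: powr_powr s_def)
    also have "\<dots> \<le> (p * c / 2 * real n) powr (- s)"
      using lower \<open>0 < s\<close> \<open>0 < p\<close> \<open>0 < c\<close> that by (intro powr_mono2') auto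
    also have "\<dots> = (p * c / 2) powr (- s) * real n powr (- s)"
      by (rule powr_mult)
    finally show ?thesis
      using \<open>0 < K\<close> by (simp add: \<rho>_def mult.assoc)
  qed
  moreover have "0 < \<rho>"
    using \<open>0 < K\<close> \<open>0 < p\<close> \<open>0 < c\<close> by (simp add: \<rho>_def)
  ultimately show ?thesis
    by (intro exI[of _ \<rho>]) (auto simp: eventually_sequentially s_def p_def)
qed

theorem mainTheorem17:
  fixes f :: "'a::euclidean_space \<Rightarrow> real" and grad :: "'a \<Rightarrow> 'a"
    and x g d :: "nat \<Rightarrow> 'a" and \<epsilon> r t :: "nat \<Rightarrow> real"
    and L \<mu> \<theta> M q :: real and xb :: 'a
  assumes C1: "is_C1_with_gradient f grad"
    and L: "L > 0" "L_descent f grad L"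
    and alg: "IRG f grad \<mu> \<theta> \<epsilon> x g d \<epsilon> r t"
    and thmu: "\<theta> < \<mu>"
    and step: "\<exists>\<delta> \<delta>'. 0 < \<delta> \<and> \<delta> < 2 \<and> 0 < \<delta>' \<and> \<delta>' \<le> (2 - \<delta>) / L \<and>
                 (\<forall>k\<ge>1. \<delta>' \<le> t k \<and> t k \<le> (2 - \<delta>) / L)"
    and acc: "accumulation_point x xb"
    and KL: "M > 0" "0 < q" "q < 1" "KL_power f grad xb M q"
    and inf: "infinite ({k. k \<ge> 1} - null_iters x)"
  defines "z \<equiv> (\<lambda>k. x (enumerate ({k. k \<ge> 1} - null_iters x) (k - 1)))"
  shows "(q \<le> 1/2 \<longrightarrow> (\<exists>C>0. \<exists>lam. 0 < lam \<and> lam < 1 \<and>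
              (\<forall>\<^sub>F k in sequentially. norm (z k - xb) \<le> C * lam ^ k)))
       \<and> (1/2 < q \<longrightarrow> (\<exists>\<rho>>0.
              (\<forall>\<^sub>F k in sequentially. norm (z k - xb) \<le> \<rho> * real k powr (- ((1 - q) / (2 * q - 1))))))"
proof -
  obtain \<delta> \<delta>' where \<delta>: "0 < \<delta>" "\<delta> < 2" "0 < \<delta>'" "\<forall>k\<ge>1. \<delta>' \<le> t k \<and> t k \<le> (2 - \<delta>) / L"
    using step by blast
  have infS: "infinite (nonnull_iters x)"
    using inf by (simp add: nonnull_iters_def)
  have zk: "\<And>k. z k = x (enumerate (nonnull_iters x) (k - 1))"
    by (simp add: z_def nonnull_iters_def)
  note descent = IRG_nonnull_subsequence_descent[OF alg thmu L \<delta> infS zk]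
  have a: "0 < \<delta> * L / (2 * (2 - \<delta>))" and b: "0 < (1 + 2 * (\<epsilon> 1 / r 1)) / \<delta>'"
    using \<delta> L alg by (simp_all add: IRG_def add_pos_pos)
  have cont: "isCont f xb"
    using C1 has_derivative_continuous unfolding is_C1_with_gradient_def by blast
  have clus: "\<exists>n\<ge>N. dist (z n) xb < e" if "0 < e" for N e
    using accumulation_point_nonnull_iters[OF acc infS that] by (simp add: zk)
  obtain N K c where "0 < K" "0 < c" and lim: "(\<lambda>n. f (z n) - f xb) \<longlonglongrightarrow> 0"
    and est: "\<forall>n\<ge>N. 0 < f (z n) - f xb \<and> norm (z n - xb) \<le> K * (f (z n) - f xb) powr (1 - q) \<and>
                f (z (Suc n)) - f xb \<le> f (z n) - f xb - c * (f (z n) - f xb) powr (2 * q)"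
    using KL_descent_sequence_estimates[where N\<^sub>0 = 1, OF a b KL(1-3) descent(2,3,1) cont clus KL(4)] by auto
  show ?thesis
    using KL_recursion_linear_rate[where F = "\<lambda>n. f (z n) - f xb" and e = "\<lambda>n. norm (z n - xb)",
        OF \<open>0 < K\<close> \<open>0 < c\<close> KL(2) _ lim est[rule_format]]
      KL_recursion_sublinear_rate[where F = "\<lambda>n. f (z n) - f xb" and e = "\<lambda>n. norm (z n - xb)",
        OF \<open>0 < K\<close> \<open>0 < c\<close> _ KL(3) est[rule_format]]
    by blast
qed

end
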